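(* Let $I$ be an interval in $\mathcal{R}$ with endpoints $a<b$, and let $X\subseteq I$ be dense in $I$ (with respect to the order topology). Then every cover $(S_n)$ of $X$ satisfies $\sum_{n=1}^\infty l(S_n)\ge l(I)$; consequently $X$ is outer measurable and $M_u(X)=l(I)=b-a$.
   Context: $\mathcal{R}$ denotes the Levi-Civita field: functions $x:\mathbb{Q}\to\mathbb{R}$ with left-finite support, with componentwise addition and formal power series multiplication, ordered by $x>0$ iff $x\ne0$ and $x[\min\operatorname{supp}x]>0$; it is a non-Archimedean ordered field extension of $\mathbb{R}$, Cauchy complete in the order topology, in which all limits and series are taken (a series $\sum a_n$ converges iff $a_n\to0$). An interval is a set $[a,b],[a,b),(a,b]$ or $(a,b)$ with $a<b$ in $\mathcal{R}$, of length $l=b-a$. A cover of $A\subseteq\mathcal{R}$ is a sequence of intervals $(S_n)_{n\ge1}$ with $A\subseteq\bigcup_n S_n$ and $\sum_n l(S_n)$ convergent in $\mathcal{R}$. $A$ is called outer measurable if the infimum $\inf\{\sum_n l(S_n): (S_n)\text{ a cover of }A\}$ exists in $\mathcal{R}$; this infimum is then called the outer measure $M_u(A)$. *)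

theory Defs
  imports Complex_Main
begin

typedef levi_civita = "{x :: rat \<Rightarrow> real. \<forall>q. finite {r. r < q \<and> x r \<noteq> 0}}"
  morphisms coeff Abs_lc
  by (rule exI[of _ "\<lambda>_. 0"]) simp

definition lc_zero :: levi_civita where
  "lc_zero = Abs_lc (\<lambda>_. 0)"

definition lc_add :: "levi_civita \<Rightarrow> levi_civita \<Rightarrow> levi_civita" where
  "lc_add x y = Abs_lc (\<lambda>q. coeff x q + coeff y q)"

definition lc_neg :: "levi_civita \<Rightarrow> levi_civita" where
  "lc_neg x = Abs_lc (\<lambda>q. - coeff x q)"

definition lc_diff :: "levi_civita \<Rightarrow> levi_civita \<Rightarrow> levi_civita" where
  "lc_diff x y = lc_add x (lc_neg y)"

text \<open>Formal power series (Cauchy) product; the sum is finite by left-finiteness.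
  (Not needed for the statement, included for completeness of the field structure.)\<close>
definition lc_mult :: "levi_civita \<Rightarrow> levi_civita \<Rightarrow> levi_civita" where
  "lc_mult x y = Abs_lc (\<lambda>q. \<Sum>r\<in>{r. coeff x r \<noteq> 0 \<and> coeff y (q - r) \<noteq> 0}.
                               coeff x r * coeff y (q - r))"

definition lc_pos :: "levi_civita \<Rightarrow> bool" where
  "lc_pos x \<longleftrightarrow> x \<noteq> lc_zero \<and>
     (\<exists>q. coeff x q \<noteq> 0 \<and> (\<forall>r<q. coeff x r = 0) \<and> coeff x q > 0)"

definition lc_less :: "levi_civita \<Rightarrow> levi_civita \<Rightarrow> bool" where
  "lc_less x y \<longleftrightarrow> lc_pos (lc_diff y x)"

definition lc_le :: "levi_civita \<Rightarrow> levi_civita \<Rightarrow> bool" where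
  "lc_le x y \<longleftrightarrow> lc_less x y \<or> x = y"

definition lc_abs :: "levi_civita \<Rightarrow> levi_civita" where
  "lc_abs x = (if lc_less x lc_zero then lc_neg x else x)"

definition lc_tendsto :: "(nat \<Rightarrow> levi_civita) \<Rightarrow> levi_civita \<Rightarrow> bool" where
  "lc_tendsto f L \<longleftrightarrow>
     (\<forall>e. lc_less lc_zero e \<longrightarrow> (\<exists>N. \<forall>n\<ge>N. lc_less (lc_abs (lc_diff (f n) L)) e))"

primrec lc_psum :: "(nat \<Rightarrow> levi_civita) \<Rightarrow> nat \<Rightarrow> levi_civita" where
  "lc_psum f 0 = lc_zero"
| "lc_psum f (Suc n) = lc_add (lc_psum f n) (f n)"

definition lc_sums :: "(nat \<Rightarrow> levi_civita) \<Rightarrow> levi_civita \<Rightarrow> bool" where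
  "lc_sums f s \<longleftrightarrow> lc_tendsto (lc_psum f) s"

definition lc_summable :: "(nat \<Rightarrow> levi_civita) \<Rightarrow> bool" where
  "lc_summable f \<longleftrightarrow> (\<exists>s. lc_sums f s)"

definition lc_suminf :: "(nat \<Rightarrow> levi_civita) \<Rightarrow> levi_civita" where
  "lc_suminf f = (THE s. lc_sums f s)"

definition lc_open_int :: "levi_civita \<Rightarrow> levi_civita \<Rightarrow> levi_civita set" where
  "lc_open_int a b = {x. lc_less a x \<and> lc_less x b}"

definition lc_interval_ends :: "levi_civita \<Rightarrow> levi_civita \<Rightarrow> levi_civita set \<Rightarrow> bool" where
  "lc_interval_ends a b S \<longleftrightarrow> lc_less a b \<and>
     (S = {x. lc_le a x \<and> lc_le x b} \<or> S = {x. lc_le a x \<and> lc_less x b} \<or>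
      S = {x. lc_less a x \<and> lc_le x b} \<or> S = {x. lc_less a x \<and> lc_less x b})"

definition lc_is_interval :: "levi_civita set \<Rightarrow> bool" where
  "lc_is_interval S \<longleftrightarrow> (\<exists>a b. lc_interval_ends a b S)"

definition lc_length :: "levi_civita set \<Rightarrow> levi_civita" where
  "lc_length S = (THE l. \<exists>a b. lc_interval_ends a b S \<and> l = lc_diff b a)"

definition lc_cover :: "(nat \<Rightarrow> levi_civita set) \<Rightarrow> levi_civita set \<Rightarrow> bool" where
  "lc_cover S A \<longleftrightarrow> (\<forall>n. lc_is_interval (S n)) \<and> A \<subseteq> (\<Union>n. S n) \<and>
     lc_summable (\<lambda>n. lc_length (S n))"

definition lc_cover_sums :: "levi_civita set \<Rightarrow> levi_civita set" where
  "lc_cover_sums A = {lc_suminf (\<lambda>n. lc_length (S n)) | S. lc_cover S A}"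

definition lc_is_inf :: "levi_civita set \<Rightarrow> levi_civita \<Rightarrow> bool" where
  "lc_is_inf T m \<longleftrightarrow> (\<forall>t\<in>T. lc_le m t) \<and> (\<forall>m'. (\<forall>t\<in>T. lc_le m' t) \<longrightarrow> lc_le m' m)"

definition outer_measurable :: "levi_civita set \<Rightarrow> bool" where
  "outer_measurable A \<longleftrightarrow> (\<exists>m. lc_is_inf (lc_cover_sums A) m)"

definition outer_measure :: "levi_civita set \<Rightarrow> levi_civita" where
  "outer_measure A = (THE m. lc_is_inf (lc_cover_sums A) m)"

text \<open>Density of X in I w.r.t. the order topology: every basic open set (open interval)
  meeting I meets X.\<close>
definition lc_dense_in :: "levi_civita set \<Rightarrow> levi_civita set \<Rightarrow> bool" where
  "lc_dense_in X I \<longleftrightarrow> (\<forall>c d. lc_less c d \<and> lc_open_int c d \<inter> I \<noteq> {} \<longrightarrow>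
                                lc_open_int c d \<inter> X \<noteq> {})"

end

theory Submission
  imports Defs "HOL-Analysis.Continuum_Not_Denumerable"
begin

(*
  Let d be the positive infinitesimal with support {1}.  Lower bound: suppose a cover of X has
  total length \<sigma> < b - a, and let d^p be the leading monomial of (b - a) - \<sigma>.  Only finitely
  many, say k, covering intervals have length that is not infinitely small compared with d^p.
  All points of any other interval share their d^p-coefficient, so together these intervals
  realise only countably many d^p-coefficients, whereas inside any window of width \<epsilon> d^p in I
  the dense set X realises uncountably many.  Hence every such window meets one of the k long
  intervals, and a greedy sweep from a to b gives b - a \<le> \<sigma> + (k + 1) \<epsilon> d^p, which is
  < b - a for a suitable real \<epsilon> > 0.

  Upper bound: I together with intervals of lengths d^(q+j) - d^(q+j+1) covers X with total
  length (b - a) + d^q, for every rational q.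
*)

section \<open>The ordered group structure\<close>

lemma coeff_left_finite: "finite {r. r < q \<and> coeff x r \<noteq> 0}"
  using coeff[of x] by simp

lemma coeff_Abs_lc: "(\<And>q. finite {r. r < q \<and> f r \<noteq> 0}) \<Longrightarrow> coeff (Abs_lc f) = f"
  by (rule Abs_lc_inverse) simp

lemma coeff_lc_zero [simp]: "coeff lc_zero q = 0"
  unfolding lc_zero_def by (subst coeff_Abs_lc) auto

lemma coeff_lc_add [simp]: "coeff (lc_add x y) q = coeff x q + coeff y q"
proof -
  have "finite {r. r < q \<and> coeff x r + coeff y r \<noteq> 0}" for q
    by (rule finite_subset[OF _ finite_UnI[OF coeff_left_finite[of q x] coeff_left_finite[of q y]]])
      auto
  then show ?thesis
    unfolding lc_add_def by (subst coeff_Abs_lc) auto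
qed

lemma coeff_lc_neg [simp]: "coeff (lc_neg x) q = - coeff x q"
  unfolding lc_neg_def by (subst coeff_Abs_lc) (auto simp: coeff_left_finite)

lemma coeff_lc_diff [simp]: "coeff (lc_diff x y) q = coeff x q - coeff y q"
  unfolding lc_diff_def by simp

lemma levi_civita_eqI: "(\<And>q. coeff x q = coeff y q) \<Longrightarrow> x = y"
  by (metis coeff_inject ext)

lemma lc_nonzero_leading_coeff:
  assumes "x \<noteq> lc_zero"
  obtains q where "coeff x q \<noteq> 0" "\<And>r. r < q \<Longrightarrow> coeff x r = 0"
proof -
  obtain q0 where q0: "coeff x q0 \<noteq> 0"
    using assms levi_civita_eqI[of x lc_zero] by auto
  define A where "A = {r. r < q0 \<and> coeff x r \<noteq> 0}"
  have "finite A"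
    unfolding A_def by (rule coeff_left_finite)
  show thesis
  proof (cases "A = {}")
    case True
    show thesis
    proof (rule that[of q0])
      show "coeff x r = 0" if "r < q0" for r
        using True that by (auto simp: A_def)
    qed (fact q0)
  next
    case False
    with \<open>finite A\<close> have min: "Min A \<in> A" "\<And>r. r \<in> A \<Longrightarrow> Min A \<le> r"
      by simp_all
    show thesis
    proof (rule that[of "Min A"])
      show "coeff x (Min A) \<noteq> 0"
        using min(1) by (simp add: A_def)
      show "coeff x r = 0" if "r < Min A" for r
      proof (rule ccontr)
        assume "coeff x r \<noteq> 0"
        moreover have "r < q0"
          using min(1) that by (simp add: A_def)
        ultimately show False
          using min(2)[of r] that by (simp add: A_def)
      qed
    qed
  qed
qed

lemma lc_pos_iff: "lc_pos x \<longleftrightarrow> (\<exists>q. 0 < coeff x q \<and> (\<forall>r<q. coeff x r = 0))"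
  unfolding lc_pos_def by (metis coeff_lc_zero less_irrefl)

lemma lc_pos_add: "lc_pos x \<Longrightarrow> lc_pos y \<Longrightarrow> lc_pos (lc_add x y)"
  unfolding lc_pos_iff
proof (elim exE conjE)
  fix q p
  assume q: "0 < coeff x q" "\<forall>r<q. coeff x r = 0" and p: "0 < coeff y p" "\<forall>r<p. coeff y r = 0"
  have "0 < coeff (lc_add x y) (min q p)"
    using q p by (cases q p rule: linorder_cases) (simp_all add: min_def)
  moreover have "\<forall>r<min q p. coeff (lc_add x y) r = 0"
    using q p by simp
  ultimately show "\<exists>s. 0 < coeff (lc_add x y) s \<and> (\<forall>r<s. coeff (lc_add x y) r = 0)"
    by blast
qed

lemma lc_pos_iff_leading_coeff:
  assumes "coeff x q \<noteq> 0" "\<And>r. r < q \<Longrightarrow> coeff x r = 0"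
  shows "lc_pos x \<longleftrightarrow> 0 < coeff x q"
proof
  assume "lc_pos x"
  then obtain p where p: "0 < coeff x p" "\<forall>r<p. coeff x r = 0"
    unfolding lc_pos_iff by blast
  have "p = q"
  proof (rule linorder_cases[of p q])
    assume "p < q"
    with assms(2) p(1) show ?thesis
      by simp
  next
    assume "q < p"
    with assms(1) p(2) show ?thesis
      by simp
  qed
  with p show "0 < coeff x q"
    by simp
next
  assume "0 < coeff x q"
  with assms(2) show "lc_pos x"
    unfolding lc_pos_iff by blast
qed

lemma lc_pos_neg_cases:
  assumes "x \<noteq> lc_zero"
  shows "lc_pos x \<longleftrightarrow> \<not> lc_pos (lc_neg x)"
proof -
  obtain q where q: "coeff x q \<noteq> 0" "\<And>r. r < q \<Longrightarrow> coeff x r = 0"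
    using lc_nonzero_leading_coeff[OF assms] by blast
  have "lc_pos (lc_neg x) \<longleftrightarrow> 0 < coeff (lc_neg x) q"
    by (rule lc_pos_iff_leading_coeff) (use q in simp_all)
  with lc_pos_iff_leading_coeff[OF q] q(1) show ?thesis
    by auto
qed

lemma lc_diff_swap: "lc_diff x y = lc_neg (lc_diff y x)"
  by (rule levi_civita_eqI) simp

lemma lc_diff_eq_zero_iff: "lc_diff x y = lc_zero \<longleftrightarrow> x = y"
  by (metis coeff_lc_diff coeff_lc_zero eq_iff_diff_eq_0 levi_civita_eqI)

instantiation levi_civita :: linordered_ab_group_add
begin

definition "0 = lc_zero"
definition "x + y = lc_add x y"
definition "- x = lc_neg x"
definition "x - y = lc_diff x y"
definition "x < y \<longleftrightarrow> lc_less x y"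
definition "x \<le> y \<longleftrightarrow> lc_le x y"

instance
proof
  fix x y z :: levi_civita
  have le: "x \<le> y \<longleftrightarrow> lc_pos (lc_diff y x) \<or> x = y" for x y :: levi_civita
    by (simp add: less_eq_levi_civita_def lc_le_def lc_less_def)
  have pos_swap: "lc_pos (lc_diff y x) \<longleftrightarrow> \<not> lc_pos (lc_diff x y)" if "x \<noteq> y" for x y
    using lc_pos_neg_cases[of "lc_diff y x"] that lc_diff_swap[of x y] lc_diff_eq_zero_iff[of y x]
    by auto
  have not_pos_self: "\<not> lc_pos (lc_diff x x)" for x
    by (simp add: lc_pos_def lc_diff_eq_zero_iff)
  show "x + y + z = x + (y + z)" "x + y = y + x" "0 + x = x" "- x + x = 0" "x - y = x + - y"
    by (rule levi_civita_eqI,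
        simp add: zero_levi_civita_def plus_levi_civita_def uminus_levi_civita_def
          minus_levi_civita_def)+
  show "x \<le> x"
    by (simp add: le)
  show "x < y \<longleftrightarrow> x \<le> y \<and> \<not> y \<le> x"
    using pos_swap[of x y] not_pos_self[of x]
    by (auto simp: le less_levi_civita_def lc_less_def)
  show "x \<le> y \<Longrightarrow> y \<le> x \<Longrightarrow> x = y"
    using pos_swap[of x y] by (auto simp: le)
  show "x \<le> y \<or> y \<le> x"
    using pos_swap[of x y] by (auto simp: le)
  have "lc_diff z x = lc_add (lc_diff z y) (lc_diff y x)"
    by (rule levi_civita_eqI) simp
  then show "x \<le> y \<Longrightarrow> y \<le> z \<Longrightarrow> x \<le> z"
    using lc_pos_add unfolding le by auto
  have "lc_diff (z + y) (z + x) = lc_diff y x"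
    by (rule levi_civita_eqI) (simp add: plus_levi_civita_def)
  then show "x \<le> y \<Longrightarrow> z + x \<le> z + y"
    unfolding le by auto
qed

end

lemma lc_operations [simp]:
  "lc_zero = 0" "lc_add x y = x + y" "lc_neg x = - x" "lc_diff x y = x - y"
  "lc_less x y \<longleftrightarrow> x < y" "lc_le x y \<longleftrightarrow> x \<le> y"
  by (simp_all add: zero_levi_civita_def plus_levi_civita_def uminus_levi_civita_def
      minus_levi_civita_def less_levi_civita_def less_eq_levi_civita_def)

lemma coeff_levi_civita_simps [simp]:
  "coeff 0 q = 0" "coeff (x + y) q = coeff x q + coeff y q" "coeff (- x) q = - coeff x q"
  "coeff (x - y) q = coeff x q - coeff y q"
  by (simp_all flip: lc_operations)

instantiation levi_civita :: ordered_ab_group_add_abs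
begin

definition abs_levi_civita :: "levi_civita \<Rightarrow> levi_civita" where
  "\<bar>x\<bar> = lc_abs x"

lemma abs_levi_civita_if: "\<bar>x :: levi_civita\<bar> = (if x < 0 then - x else x)"
  by (simp add: abs_levi_civita_def lc_abs_def)

instance
proof
  fix a b :: levi_civita
  show "0 \<le> \<bar>a\<bar>" "a \<le> \<bar>a\<bar>" "\<bar>- a\<bar> = \<bar>a\<bar>"
    by (auto simp: abs_levi_civita_if)
  show "a \<le> b \<Longrightarrow> - a \<le> b \<Longrightarrow> \<bar>a\<bar> \<le> b"
    by (simp add: abs_levi_civita_if)
  have "a \<le> \<bar>a\<bar>" "- a \<le> \<bar>a\<bar>" "b \<le> \<bar>b\<bar>" "- b \<le> \<bar>b\<bar>"
    by (auto simp: abs_levi_civita_if)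
  then have "a + b \<le> \<bar>a\<bar> + \<bar>b\<bar>" "- (a + b) \<le> \<bar>a\<bar> + \<bar>b\<bar>"
    using add_mono[of "- a" "\<bar>a\<bar>" "- b" "\<bar>b\<bar>"] by (simp_all add: add_mono)
  then show "\<bar>a + b\<bar> \<le> \<bar>a\<bar> + \<bar>b\<bar>"
    by (simp add: abs_levi_civita_if)
qed

end

lemma lc_abs_eq_abs [simp]: "lc_abs x = \<bar>x\<bar>"
  by (simp add: abs_levi_civita_def)

lemma levi_civita_pos_iff: "0 < x \<longleftrightarrow> (\<exists>q. 0 < coeff x q \<and> (\<forall>r<q. coeff x r = 0))"
proof -
  have "0 < x \<longleftrightarrow> lc_pos (lc_diff x lc_zero)"
    by (simp only: less_levi_civita_def lc_less_def zero_levi_civita_def)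
  then show ?thesis
    by (simp add: lc_pos_iff)
qed

lemma levi_civita_posI: "0 < coeff x q \<Longrightarrow> (\<And>r. r < q \<Longrightarrow> coeff x r = 0) \<Longrightarrow> 0 < x"
  unfolding levi_civita_pos_iff by blast

lemma levi_civita_negI: "coeff x q < 0 \<Longrightarrow> (\<And>r. r < q \<Longrightarrow> coeff x r = 0) \<Longrightarrow> x < 0"
  using levi_civita_posI[of "- x" q] by simp

lemma levi_civita_posE:
  assumes "0 < x"
  obtains q where "0 < coeff x q" "\<And>r. r < q \<Longrightarrow> coeff x r = 0"
  using assms unfolding levi_civita_pos_iff by blast

section \<open>Monomials and orders of magnitude\<close>

text \<open>\<open>lc_monom q c\<close> is \<open>c d^q\<close>; \<open>supp_above p x\<close> says that \<open>x\<close> is infinitely small compared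
  with \<open>d^p\<close>.\<close>

definition lc_monom :: "rat \<Rightarrow> real \<Rightarrow> levi_civita" where
  "lc_monom q c = Abs_lc (\<lambda>r. if r = q then c else 0)"

lemma coeff_lc_monom [simp]: "coeff (lc_monom q c) r = (if r = q then c else 0)"
proof -
  have "finite {r. r < s \<and> (if r = q then c else 0) \<noteq> 0}" for s
    by (rule finite_subset[of _ "{q}"]) auto
  then show ?thesis
    unfolding lc_monom_def by (subst coeff_Abs_lc) auto
qed

lemma lc_monom_add: "lc_monom q (c + d) = lc_monom q c + lc_monom q d"
  by (rule levi_civita_eqI) simp

lemma lc_monom_zero [simp]: "lc_monom q 0 = 0"
  by (rule levi_civita_eqI) simp

lemma lc_monom_sum: "lc_monom q (\<Sum>i\<in>A. f i) = (\<Sum>i\<in>A. lc_monom q (f i))"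
  by (induction A rule: infinite_finite_induct) (simp_all add: lc_monom_add)

lemma lc_monom_pos: "0 < c \<Longrightarrow> 0 < lc_monom q c"
  by (rule levi_civita_posI[of _ q]) auto

definition supp_above :: "rat \<Rightarrow> levi_civita \<Rightarrow> bool" where
  "supp_above p x \<longleftrightarrow> (\<forall>r\<le>p. coeff x r = 0)"

lemma supp_above_zero [simp]: "supp_above p 0"
  and supp_above_minus [simp]: "supp_above p (- x) \<longleftrightarrow> supp_above p x"
  and supp_above_diff: "supp_above p x \<Longrightarrow> supp_above p y \<Longrightarrow> supp_above p (x - y)"
  and supp_above_lc_monom: "p < q \<Longrightarrow> supp_above p (lc_monom q c)"
  unfolding supp_above_def by auto

lemma less_of_supp_above:
  assumes "supp_above q z" "0 < coeff e q" "\<And>r. r < q \<Longrightarrow> coeff e r = 0"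
  shows "z < e"
  using levi_civita_posI[of "e - z" q] assms by (simp add: supp_above_def)

lemma supp_above_mono:
  assumes "0 \<le> x" "x \<le> y" "supp_above p y"
  shows "supp_above p x"
proof (rule ccontr)
  assume "\<not> supp_above p x"
  then have "0 < x"
    using assms(1) by (auto simp: order.order_iff_strict)
  then obtain q where q: "0 < coeff x q" "\<And>r. r < q \<Longrightarrow> coeff x r = 0"
    using levi_civita_posE by blast
  have "q \<le> p"
    using \<open>\<not> supp_above p x\<close> q by (meson leI order.trans supp_above_def)
  then have "y - x < 0"
    using q assms(3) by (intro levi_civita_negI[of _ q]) (auto simp: supp_above_def)
  with assms(2) show False
    by simp
qed

lemma supp_above_abs_mono: "\<bar>x\<bar> \<le> \<bar>y\<bar> \<Longrightarrow> supp_above p y \<Longrightarrow> supp_above p x"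
  using supp_above_mono[of "\<bar>x\<bar>" "\<bar>y\<bar>" p] by (auto simp: abs_levi_civita_if split: if_splits)

lemma supp_above_abs [simp]: "supp_above p \<bar>x\<bar> \<longleftrightarrow> supp_above p x"
  by (simp add: abs_levi_civita_if)

lemma supp_above_all_iff: "(\<forall>p. supp_above p x) \<longleftrightarrow> x = 0"
proof
  assume "\<forall>p. supp_above p x"
  then have "coeff x q = coeff 0 q" for q
    unfolding supp_above_def by (metis coeff_levi_civita_simps(1) order_refl)
  then show "x = 0"
    by (rule levi_civita_eqI)
qed simp

section \<open>Limits and series\<close>

lemma lc_tendsto_iff_supp_above:
  "lc_tendsto f L \<longleftrightarrow> (\<forall>p. \<forall>\<^sub>F n in sequentially. supp_above p (f n - L))"
proof
  assume lim: "lc_tendsto f L"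
  show "\<forall>p. \<forall>\<^sub>F n in sequentially. supp_above p (f n - L)"
  proof
    fix p
    have pos: "0 < lc_monom (p + 1) 1"
      by (simp add: lc_monom_pos)
    with lim obtain N where N: "\<forall>n\<ge>N. \<bar>f n - L\<bar> < lc_monom (p + 1) 1"
      unfolding lc_tendsto_def by auto
    with pos have "supp_above p (f n - L)" if "N \<le> n" for n
      using supp_above_abs_mono[of "f n - L" "lc_monom (p + 1) 1" p] supp_above_lc_monom[of p "p + 1"]
        abs_of_pos[OF pos] N that by (simp add: less_imp_le)
    then show "\<forall>\<^sub>F n in sequentially. supp_above p (f n - L)"
      by (auto simp: eventually_sequentially)
  qed
next
  assume small: "\<forall>p. \<forall>\<^sub>F n in sequentially. supp_above p (f n - L)"
  show "lc_tendsto f L"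
    unfolding lc_tendsto_def lc_operations lc_abs_eq_abs
  proof (intro allI impI)
    fix e :: levi_civita
    assume "0 < e"
    then obtain q where q: "0 < coeff e q" "\<And>r. r < q \<Longrightarrow> coeff e r = 0"
      using levi_civita_posE by blast
    from small obtain N where N: "\<forall>n\<ge>N. supp_above q (f n - L)"
      by (auto simp: eventually_sequentially)
    have "\<bar>f n - L\<bar> < e" if "N \<le> n" for n
      by (rule less_of_supp_above[OF _ q]) (use N that in simp)
    then show "\<exists>N. \<forall>n\<ge>N. \<bar>f n - L\<bar> < e"
      by blast
  qed
qed

lemma lc_tendsto_unique:
  assumes "lc_tendsto f L" "lc_tendsto f L'"
  shows "L = L'"
proof -
  have "supp_above p (L' - L)" for p
  proof -
    have "\<forall>\<^sub>F n in sequentially. supp_above p (f n - L) \<and> supp_above p (f n - L')"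
      using assms by (simp add: lc_tendsto_iff_supp_above eventually_conj)
    then obtain n where "supp_above p (f n - L)" "supp_above p (f n - L')"
      by (auto simp: eventually_sequentially)
    then have "supp_above p ((f n - L) - (f n - L'))"
      by (rule supp_above_diff)
    then show ?thesis
      by simp
  qed
  then show ?thesis
    using supp_above_all_iff[of "L' - L"] by simp
qed

lemma lc_suminf_eqI: "lc_sums f s \<Longrightarrow> lc_suminf f = s"
  unfolding lc_suminf_def lc_sums_def using lc_tendsto_unique by blast

lemma lc_psum_eq_sum: "lc_psum f n = (\<Sum>i<n. f i)"
  by (induction n) simp_all

lemma lc_sums_terms_supp_above:
  assumes "lc_sums f s"
  shows "\<forall>\<^sub>F n in sequentially. supp_above p (f n)"
proof -
  obtain N where N: "\<And>n. N \<le> n \<Longrightarrow> supp_above p (lc_psum f n - s)"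
    using assms by (auto simp: lc_sums_def lc_tendsto_iff_supp_above eventually_sequentially)
  have "supp_above p (f n)" if "N \<le> n" for n
  proof -
    have "supp_above p (lc_psum f (Suc n) - s)" "supp_above p (lc_psum f n - s)"
      using N that by (simp_all del: lc_psum.simps)
    from supp_above_diff[OF this] show ?thesis
      by simp
  qed
  then show ?thesis
    by (auto simp: eventually_sequentially)
qed

lemma lc_psum_mono: "(\<And>n. 0 \<le> f n) \<Longrightarrow> m \<le> n \<Longrightarrow> lc_psum f m \<le> lc_psum f n"
  unfolding lc_psum_eq_sum by (rule sum_mono2) auto

lemma lc_psum_le_sums:
  assumes nonneg: "\<And>n. 0 \<le> f n" and sums: "lc_sums f s"
  shows "lc_psum f N \<le> s"
proof (rule ccontr)
  assume "\<not> lc_psum f N \<le> s"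
  then have pos: "0 < lc_psum f N - s"
    by simp
  then obtain q where q: "0 < coeff (lc_psum f N - s) q"
    by (auto simp only: levi_civita_pos_iff)
  have "\<forall>\<^sub>F n in sequentially. supp_above q (lc_psum f n - s)"
    using sums by (simp add: lc_sums_def lc_tendsto_iff_supp_above)
  then obtain M where M: "\<forall>n\<ge>M. supp_above q (lc_psum f n - s)"
    by (auto simp: eventually_sequentially)
  have "lc_psum f N - s \<le> lc_psum f (max N M) - s"
    using lc_psum_mono[OF nonneg, of N "max N M"] by simp
  from supp_above_mono[OF less_imp_le[OF pos] this] M have "supp_above q (lc_psum f N - s)"
    by simp
  with q show False
    by (simp add: supp_above_def)
qed

lemma lc_exists_between:
  assumes "x < y"
  obtains z :: levi_civita where "x < z" "z < y"
proof -
  from assms have "0 < y - x"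
    by simp
  then obtain q where q: "0 < coeff (y - x) q" "\<And>r. r < q \<Longrightarrow> coeff (y - x) r = 0"
    using levi_civita_posE by blast
  have "lc_monom (q + 1) 1 < y - x"
    by (rule less_of_supp_above[OF supp_above_lc_monom q]) simp
  moreover have "0 < lc_monom (q + 1) 1"
    by (simp add: lc_monom_pos)
  ultimately show thesis
    by (intro that[of "x + lc_monom (q + 1) 1"]) (simp_all add: less_diff_eq add.commute)
qed

lemma lc_interval_ends_bounds:
  assumes "lc_interval_ends a b S"
  shows "a < b" "{a<..<b} \<subseteq> S" "S \<subseteq> {a..b}"
  using assms unfolding lc_interval_ends_def by auto

lemma lc_interval_ends_unique:
  assumes "lc_interval_ends a b S" "lc_interval_ends a' b' S"
  shows "a = a'" "b = b'"
proof -
  have "\<not> a < a' \<and> \<not> b' < b" if "lc_interval_ends a b S" "lc_interval_ends a' b' S" for a b a' b'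
  proof (intro conjI notI)
    note S = lc_interval_ends_bounds[OF that(1)] and S' = lc_interval_ends_bounds[OF that(2)]
    assume "a < a'"
    with S(1) obtain z where "a < z" "z < min a' b"
      by (metis lc_exists_between min_less_iff_conj)
    with S(2) S'(3) show False
      by force
  next
    note S = lc_interval_ends_bounds[OF that(1)] and S' = lc_interval_ends_bounds[OF that(2)]
    assume "b' < b"
    with S(1) obtain z where "max b' a < z" "z < b"
      by (metis lc_exists_between max_less_iff_conj)
    with S(2) S'(3) show False
      by force
  qed
  with assms show "a = a'" "b = b'"
    by (meson linorder_neqE)+
qed

lemma lc_length_eq: "lc_interval_ends a b S \<Longrightarrow> lc_length S = b - a"
  unfolding lc_length_def by (rule the_equality) (auto dest: lc_interval_ends_unique)

section \<open>Covers of dense sets\<close>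

lemma sum_lengths_ge_if_intervals_meet_windows:
  fixes lo hi :: "'i \<Rightarrow> 'a :: linordered_ab_group_add"
  assumes "finite F" "0 \<le> e" "\<And>n. n \<in> F \<Longrightarrow> lo n \<le> hi n"
    and "\<And>c. a \<le> c \<Longrightarrow> c + e \<le> b \<Longrightarrow> \<exists>n\<in>F. {c<..<c + e} \<inter> {lo n..hi n} \<noteq> {}"
  shows "b - a \<le> (\<Sum>n\<in>F. hi n - lo n + e) + e"
  using assms
proof (induction "card F" arbitrary: F a rule: less_induct)
  case less
  have sum_nonneg: "0 \<le> (\<Sum>n\<in>G. hi n - lo n + e)" if "G \<subseteq> F" for G
    using less.prems(2,3) that by (intro sum_nonneg) (auto intro: add_nonneg_nonneg)
  show ?case
  proof (cases "a + e \<le> b")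
    case False
    then have "b - a \<le> e"
      by (simp add: algebra_simps)
    also have "\<dots> \<le> (\<Sum>n\<in>F. hi n - lo n + e) + e"
      using sum_nonneg[of F] by simp
    finally show ?thesis .
  next
    case True
    then obtain n y where n: "n \<in> F" and y: "a < y" "y < a + e" "lo n \<le> y" "y \<le> hi n"
      using less.prems(4)[of a] by auto
    have first: "hi n - a \<le> hi n - lo n + e"
      using y by (simp add: algebra_simps)
    have split: "(\<Sum>m\<in>F. hi m - lo m + e) = (hi n - lo n + e) + (\<Sum>m\<in>F - {n}. hi m - lo m + e)"
      using less.prems(1) n by (simp add: sum.remove)
    show ?thesis
    proof (cases "b \<le> hi n")
      case True
      have "b - a \<le> hi n - a"
        using True by simp
      also note first
      also have "hi n - lo n + e \<le> (hi n - lo n + e) + ((\<Sum>m\<in>F - {n}. hi m - lo m + e) + e)"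
        using sum_nonneg[of "F - {n}"] less.prems(2) by simp
      finally show ?thesis
        unfolding split by (simp only: add.assoc)
    next
      case False
      have "b - hi n \<le> (\<Sum>m\<in>F - {n}. hi m - lo m + e) + e"
      proof (rule less.hyps)
        show "card (F - {n}) < card F"
          using less.prems(1) n by (rule card_Diff1_less)
        show "\<exists>m\<in>F - {n}. {c<..<c + e} \<inter> {lo m..hi m} \<noteq> {}"
          if "hi n \<le> c" "c + e \<le> b" for c
        proof -
          have "a \<le> c"
            using y that(1) by simp
          with that less.prems(4)[of c] obtain m where "m \<in> F" "{c<..<c + e} \<inter> {lo m..hi m} \<noteq> {}"
            by blast
          moreover from this(2) have "m \<noteq> n"
            using that(1) by auto
          ultimately show ?thesis
            by blast
        qed
      qed (use less.prems in auto)
      from add_mono[OF this first] show ?thesis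
        unfolding split by (simp add: algebra_simps)
    qed
  qed
qed

lemma lc_open_int_eq [simp]: "lc_open_int a b = {a<..<b}"
  by (auto simp: lc_open_int_def)

lemma dense_window_coeffs_uncountable:
  assumes dense: "lc_dense_in X I" and window: "{c<..<c + lc_monom p \<epsilon>} \<subseteq> I" and "0 < \<epsilon>"
  shows "uncountable ((\<lambda>x. coeff x p) ` (X \<inter> {c<..<c + lc_monom p \<epsilon>}))"
proof -
  define \<gamma> where "\<gamma> = coeff c p"
  define w where "w = lc_monom (p + 1) 1"
  have "0 < w" "supp_above p w"
    by (simp_all add: w_def lc_monom_pos supp_above_lc_monom)
  txt \<open>Every point within \<open>w\<close> of \<open>c + (s - \<gamma>) d^p\<close> has \<open>d^p\<close>-coefficient \<open>s\<close>, and density puts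
    a point of \<open>X\<close> there.\<close>
  have "{\<gamma><..<\<gamma> + \<epsilon>} \<subseteq> (\<lambda>x. coeff x p) ` (X \<inter> {c<..<c + lc_monom p \<epsilon>})"
  proof
    fix s
    assume s: "s \<in> {\<gamma><..<\<gamma> + \<epsilon>}"
    define z where "z = c + lc_monom p (s - \<gamma>)"
    have "0 < (z - w) - c"
      using s by (intro levi_civita_posI[of _ p]) (auto simp: z_def w_def)
    moreover have "0 < (c + lc_monom p \<epsilon>) - (z + w)"
      using s by (intro levi_civita_posI[of _ p]) (auto simp: z_def w_def)
    ultimately have near: "{z - w<..<z + w} \<subseteq> {c<..<c + lc_monom p \<epsilon>}"
      by auto
    have "z \<in> {z - w<..<z + w}"
      using \<open>0 < w\<close> by simp
    with near window have "{z - w<..<z + w} \<inter> I \<noteq> {}"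
      by blast
    moreover have "z - w < z + w"
      using \<open>0 < w\<close> by simp
    ultimately have "{z - w<..<z + w} \<inter> X \<noteq> {}"
      using dense unfolding lc_dense_in_def by simp
    then obtain x where x: "x \<in> X" "x \<in> {z - w<..<z + w}"
      by blast
    then have "\<bar>x - z\<bar> \<le> \<bar>w\<bar>"
      using \<open>0 < w\<close> by (auto simp: abs_le_iff algebra_simps)
    then have "supp_above p (x - z)"
      using \<open>supp_above p w\<close> by (rule supp_above_abs_mono)
    then have "coeff x p = s"
      by (simp add: supp_above_def z_def \<gamma>_def)
    with x near show "s \<in> (\<lambda>x. coeff x p) ` (X \<inter> {c<..<c + lc_monom p \<epsilon>})"
      by blast
  qed
  moreover have "uncountable {\<gamma><..<\<gamma> + \<epsilon>}"
    using \<open>0 < \<epsilon>\<close> by (simp add: uncountable_open_interval)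
  ultimately show ?thesis
    using countable_subset by blast
qed

lemma coeff_eq_in_short_interval:
  assumes S: "lc_interval_ends lo hi S" and short: "supp_above p (hi - lo)" and "x \<in> S"
  shows "coeff x p = coeff lo p"
proof -
  have "lo \<le> x" "x \<le> hi"
    using lc_interval_ends_bounds(3)[OF S] \<open>x \<in> S\<close> by auto
  then have "supp_above p (x - lo)"
    using supp_above_mono[of "x - lo" "hi - lo" p] short by simp
  then show ?thesis
    by (simp add: supp_above_def)
qed

lemma dense_window_meets_long_interval:
  fixes lo hi :: "nat \<Rightarrow> levi_civita"
  assumes dense: "lc_dense_in X I" and window: "{c<..<c + lc_monom p \<epsilon>} \<subseteq> I" and "0 < \<epsilon>"
    and ends: "\<And>n. lc_interval_ends (lo n) (hi n) (S n)" and cover: "X \<subseteq> (\<Union>n. S n)"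
  shows "\<exists>n. \<not> supp_above p (hi n - lo n) \<and> {c<..<c + lc_monom p \<epsilon>} \<inter> {lo n..hi n} \<noteq> {}"
proof (rule ccontr)
  define W where "W = {c<..<c + lc_monom p \<epsilon>}"
  assume "\<not> ?thesis"
  then have short: "supp_above p (hi n - lo n)" if "W \<inter> {lo n..hi n} \<noteq> {}" for n
    using that unfolding W_def by blast
  have "(\<lambda>x. coeff x p) ` (X \<inter> W) \<subseteq> range (\<lambda>n. coeff (lo n) p)"
  proof clarify
    fix x
    assume "x \<in> X" "x \<in> W"
    with cover obtain n where "x \<in> S n"
      by blast
    moreover from this have "x \<in> {lo n..hi n}"
      using lc_interval_ends_bounds(3)[OF ends] by blast
    ultimately have "coeff x p = coeff (lo n) p"
      using coeff_eq_in_short_interval[OF ends short] \<open>x \<in> W\<close> by blast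
    then show "coeff x p \<in> range (\<lambda>n. coeff (lo n) p)"
      by simp
  qed
  then have "countable ((\<lambda>x. coeff x p) ` (X \<inter> W))"
    by (rule countable_subset) (simp add: countable_image)
  with dense_window_coeffs_uncountable[OF dense window \<open>0 < \<epsilon>\<close>] show False
    by (simp add: W_def)
qed

lemma lc_sums_non_supp_above_terms:
  assumes nonneg: "\<And>n. 0 \<le> f n" and sums: "lc_sums f s"
  shows "finite {n. \<not> supp_above p (f n)}" "(\<Sum>n | \<not> supp_above p (f n). f n) \<le> s"
proof -
  obtain N where N: "\<And>n. N \<le> n \<Longrightarrow> supp_above p (f n)"
    using lc_sums_terms_supp_above[OF sums, of p] by (auto simp: eventually_sequentially)
  then have sub: "{n. \<not> supp_above p (f n)} \<subseteq> {..<N}"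
    by (auto simp: not_less[symmetric])
  then show "finite {n. \<not> supp_above p (f n)}"
    by (rule finite_subset) simp
  have "(\<Sum>n | \<not> supp_above p (f n). f n) \<le> (\<Sum>n<N. f n)"
    using sub nonneg by (intro sum_mono2) auto
  also have "\<dots> \<le> s"
    using lc_psum_le_sums[OF nonneg sums, of N] by (simp add: lc_psum_eq_sum)
  finally show "(\<Sum>n | \<not> supp_above p (f n). f n) \<le> s" .
qed

lemma lc_cover_sum_ge_length:
  assumes I: "lc_interval_ends a b I" and dense: "lc_dense_in X I" and cover: "lc_cover S X"
  shows "b - a \<le> lc_suminf (\<lambda>n. lc_length (S n))"
proof -
  have "\<forall>n. \<exists>l h. lc_interval_ends l h (S n)"
    using cover unfolding lc_cover_def lc_is_interval_def by blast
  then obtain lo hi where ends: "\<And>n. lc_interval_ends (lo n) (hi n) (S n)"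
    by metis
  have len: "lc_length (S n) = hi n - lo n" for n
    using lc_length_eq[OF ends] .
  have nonneg: "0 \<le> hi n - lo n" for n
    using lc_interval_ends_bounds(1)[OF ends] by (simp add: less_imp_le)
  have covered: "X \<subseteq> (\<Union>n. S n)"
    using cover by (simp add: lc_cover_def)
  from cover obtain \<sigma> where sums: "lc_sums (\<lambda>n. hi n - lo n) \<sigma>"
    unfolding lc_cover_def lc_summable_def len by blast
  show ?thesis
    unfolding len lc_suminf_eqI[OF sums]
  proof (rule ccontr)
    assume "\<not> b - a \<le> \<sigma>"
    then have "0 < (b - a) - \<sigma>"
      by simp
    then obtain p where p: "0 < coeff ((b - a) - \<sigma>) p" "\<And>r. r < p \<Longrightarrow> coeff ((b - a) - \<sigma>) r = 0"
      using levi_civita_posE by blast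
    define c0 where "c0 = coeff ((b - a) - \<sigma>) p"
    define F where "F = {n. \<not> supp_above p (hi n - lo n)}"
    define \<epsilon> where "\<epsilon> = c0 / (2 * (card F + 1))"
    have "0 < \<epsilon>"
      using p(1) by (simp add: \<epsilon>_def c0_def)
    have total_width: "(card F + 1) * \<epsilon> = c0 / 2"
      unfolding \<epsilon>_def by (simp add: field_simps)
    have hit: "\<exists>n\<in>F. {c<..<c + lc_monom p \<epsilon>} \<inter> {lo n..hi n} \<noteq> {}"
      if "a \<le> c" "c + lc_monom p \<epsilon> \<le> b" for c
    proof -
      have "{c<..<c + lc_monom p \<epsilon>} \<subseteq> {a<..<b}"
        using that by (auto intro: le_less_trans less_le_trans)
      with lc_interval_ends_bounds(2)[OF I] have "{c<..<c + lc_monom p \<epsilon>} \<subseteq> I"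
        by blast
      from dense_window_meets_long_interval[OF dense this \<open>0 < \<epsilon>\<close> ends covered]
      show ?thesis
        unfolding F_def by blast
    qed
    have "b - a \<le> (\<Sum>n\<in>F. hi n - lo n + lc_monom p \<epsilon>) + lc_monom p \<epsilon>"
      using lc_sums_non_supp_above_terms(1)[OF nonneg sums] \<open>0 < \<epsilon>\<close> nonneg hit
      by (intro sum_lengths_ge_if_intervals_meet_windows)
        (simp_all add: F_def lc_monom_pos less_imp_le)
    also have "\<dots> = (\<Sum>n\<in>F. hi n - lo n) + lc_monom p ((card F + 1) * \<epsilon>)"
    proof -
      have "(\<Sum>n\<in>F. lc_monom p \<epsilon>) = lc_monom p (card F * \<epsilon>)"
        by (simp flip: lc_monom_sum)
      then show ?thesis
        by (simp add: sum.distrib distrib_right add.assoc lc_monom_add)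
    qed
    also have "\<dots> = (\<Sum>n\<in>F. hi n - lo n) + lc_monom p (c0 / 2)"
      by (simp only: total_width)
    also have "\<dots> \<le> \<sigma> + lc_monom p (c0 / 2)"
      using lc_sums_non_supp_above_terms(2)[OF nonneg sums, of p] by (simp add: F_def)
    finally have "0 \<le> \<sigma> + lc_monom p (c0 / 2) - (b - a)"
      by simp
    moreover have "\<sigma> + lc_monom p (c0 / 2) - (b - a) < 0"
      using p by (intro levi_civita_negI[of _ p]) (auto simp: c0_def field_simps)
    ultimately show False
      by simp
  qed
qed

lemma lc_le_if_le_add_monom:
  assumes "\<And>q. x \<le> y + lc_monom q 1"
  shows "x \<le> y"
proof (rule ccontr)
  assume "\<not> x \<le> y"
  then have "0 < x - y"
    by simp
  then obtain q where q: "0 < coeff (x - y) q" "\<And>r. r < q \<Longrightarrow> coeff (x - y) r = 0"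
    using levi_civita_posE by blast
  have "lc_monom (q + 1) 1 < x - y"
    by (rule less_of_supp_above[OF supp_above_lc_monom q]) simp
  with assms[of "q + 1"] show False
    by (simp add: algebra_simps)
qed

lemma lc_sums_telescope:
  assumes "lc_tendsto D 0"
  shows "lc_sums (\<lambda>n. D n - D (Suc n)) (D 0)"
proof -
  have "lc_psum (\<lambda>n. D n - D (Suc n)) n = D 0 - D n" for n
    by (induction n) simp_all
  with assms show ?thesis
    by (simp add: lc_sums_def lc_tendsto_iff_supp_above)
qed

lemma lc_cover_sums_near_length:
  assumes I: "lc_interval_ends a b I" and "X \<subseteq> I"
  shows "(b - a) + lc_monom q 1 \<in> lc_cover_sums X"
proof -
  txt \<open>A cover is an infinite sequence of nondegenerate intervals, so \<open>I\<close> is padded with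
    intervals of lengths \<open>d^(q+j) - d^(q+j+1)\<close>, which telescope to \<open>d^q\<close>.\<close>
  define D where "D n = (case n of 0 \<Rightarrow> (b - a) + lc_monom q 1 | Suc j \<Rightarrow> lc_monom (q + of_nat j) 1)"
    for n
  define l where "l n = D n - D (Suc n)" for n
  define T where "T n = (if n = 0 then I else {x. a \<le> x \<and> x \<le> a + l n})" for n
  have "lc_tendsto D 0"
    unfolding lc_tendsto_iff_supp_above eventually_sequentially
  proof
    fix p
    obtain N :: nat where "p - q < of_nat N"
      using reals_Archimedean2 by blast
    then have "supp_above p (D n - 0)" if "Suc N \<le> n" for n
      using that by (auto simp: D_def supp_above_lc_monom split: nat.split)
    then show "\<exists>N. \<forall>n\<ge>N. supp_above p (D n - 0)"
      by blast
  qed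
  then have sums: "lc_sums l (D 0)"
    unfolding l_def by (rule lc_sums_telescope)
  have l0: "l 0 = b - a"
    by (simp add: l_def D_def)
  have ends: "lc_interval_ends a (a + l n) (T n)" for n
  proof (cases n)
    case 0
    with I show ?thesis
      by (simp add: T_def l0)
  next
    case (Suc j)
    have "0 < l n"
      unfolding Suc l_def D_def by (intro levi_civita_posI[of _ "q + of_nat j"]) auto
    then show ?thesis
      by (simp add: lc_interval_ends_def T_def Suc)
  qed
  have "lc_cover T X"
    unfolding lc_cover_def lc_is_interval_def lc_summable_def
  proof (intro conjI)
    show "\<forall>n. \<exists>a b. lc_interval_ends a b (T n)"
      using ends by blast
    show "X \<subseteq> (\<Union>n. T n)"
      using \<open>X \<subseteq> I\<close> by (auto simp: T_def)
    show "\<exists>s. lc_sums (\<lambda>n. lc_length (T n)) s"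
      using sums by (auto simp: lc_length_eq[OF ends])
  qed
  moreover have "lc_suminf (\<lambda>n. lc_length (T n)) = (b - a) + lc_monom q 1"
    using lc_suminf_eqI[OF sums] by (simp add: lc_length_eq[OF ends] D_def)
  ultimately show ?thesis
    unfolding lc_cover_sums_def by (intro CollectI exI[of _ T]) simp
qed

lemma outer_measure_eqI:
  assumes "lc_is_inf (lc_cover_sums A) m"
  shows "outer_measurable A" "outer_measure A = m"
proof -
  show "outer_measurable A"
    using assms unfolding outer_measurable_def by blast
  have "m' = m" if "lc_is_inf (lc_cover_sums A) m'" for m'
    using that assms unfolding lc_is_inf_def lc_operations by (blast intro: order.antisym)
  with assms show "outer_measure A = m"
    unfolding outer_measure_def by (rule the_equality)
qed

theorem mainTheorem11:
  fixes a b :: levi_civita and I X :: "levi_civita set"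
  assumes "lc_interval_ends a b I"
    and "X \<subseteq> I"
    and "lc_dense_in X I"
  shows "(\<forall>S. lc_cover S X \<longrightarrow> lc_le (lc_diff b a) (lc_suminf (\<lambda>n. lc_length (S n))))
         \<and> outer_measurable X
         \<and> outer_measure X = lc_length I
         \<and> lc_length I = lc_diff b a"
proof -
  have lower: "\<forall>S. lc_cover S X \<longrightarrow> b - a \<le> lc_suminf (\<lambda>n. lc_length (S n))"
    using lc_cover_sum_ge_length[OF assms(1,3)] by blast
  have "lc_is_inf (lc_cover_sums X) (b - a)"
    unfolding lc_is_inf_def lc_operations
  proof (intro conjI ballI allI impI)
    show "b - a \<le> t" if "t \<in> lc_cover_sums X" for t
      using that lower unfolding lc_cover_sums_def by blast
    show "m \<le> b - a" if "\<forall>t\<in>lc_cover_sums X. m \<le> t" for m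
      using that lc_cover_sums_near_length[OF assms(1,2)] by (blast intro: lc_le_if_le_add_monom)
  qed
  with lower lc_length_eq[OF assms(1)] show ?thesis
    by (simp add: outer_measure_eqI)
qed

end
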